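(* Let $\mathcal{S}$ be the regular $d$-dimensional $\delta$-grid, $1\le q<\infty$, and let $\Omega\subseteq[0,1]^d$ be a convex body containing a ball of radius at least $10d^{3/2}\delta$. Then for every $t>0$ and every $f\in B^q_{\mathcal{S}}(0;t;\Omega)$, $f(x)\ge-20dt$ for all $x\in\Omega$.
   Context: $\mathcal{S}=\{(k_1\delta,\dots,k_d\delta):k_i\in\mathbb{Z}\}$. $\ell_{\mathcal{S}}(f,\Omega,q)=\big(\frac{1}{\#(\Omega\cap\mathcal{S})}\sum_{s\in\Omega\cap\mathcal{S}}|f(s)|^q\big)^{1/q}$ and $B^q_{\mathcal{S}}(0;t;\Omega)=\{f:\Omega\to\mathbb{R}\ \text{convex}:\ \ell_{\mathcal{S}}(f,\Omega,q)\le t\}$. *)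

theory Defs
  imports "HOL-Analysis.Analysis"
begin

definition grid :: "real \<Rightarrow> (real^'n) set" where
  "grid \<delta> = {x. \<forall>i. \<exists>k::int. x $ i = real_of_int k * \<delta>}"

definition ell_S :: "real \<Rightarrow> (real^'n \<Rightarrow> real) \<Rightarrow> (real^'n) set \<Rightarrow> real \<Rightarrow> real" where
  "ell_S \<delta> f \<Omega> q =
     ((1 / real (card (\<Omega> \<inter> grid \<delta>))) * (\<Sum>s\<in>\<Omega> \<inter> grid \<delta>. \<bar>f s\<bar> powr q)) powr (1 / q)"

text \<open>B^q_S(0;t;Omega): convex functions on Omega with discrete q-norm at most t
  (functions are total, only values on Omega matter).\<close>
definition B_S :: "real \<Rightarrow> real \<Rightarrow> real \<Rightarrow> (real^'n) set \<Rightarrow> (real^'n \<Rightarrow> real) set" where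
  "B_S \<delta> q t \<Omega> = {f. convex_on \<Omega> f \<and> ell_S \<delta> f \<Omega> q \<le> t}"

end

theory Submission
  imports Defs
begin

text \<open>
  Fix x in \<Omega> and put \<theta> = 1 - 1/(2d). Call a grid point y good if the \<delta>-cube around
  w = x + (y - x)/\<theta> lies in \<Omega>. Since y = (1 - \<theta>) x + \<theta> w, convexity gives
  f y \<le> (1 - \<theta>) f x + \<theta> f w, and f w is at most the multilinear interpolation of \<bar>f\<bar> at
  the vertices of the grid cell containing w. Summing over the good points, every grid value
  receives total weight at most 1, because the dilated good points stay a cell apart; hence
  (1 - \<theta>) (- f x) \<cdot> #good \<le> (1 + \<theta>) \<Sum>\<bar>f\<bar>. A volume comparison shows #good \<ge> #(\<Omega> \<inter> S)/5:
  the grid cells at points of \<Omega> fit into a (1 + \<surd>d \<delta>/r)-dilate of \<Omega>, while the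
  \<theta>(1 - 3\<surd>d \<delta>/r)-contraction of \<Omega> towards x is covered by the cells of good points, and
  r \<ge> 10 d^(3/2) \<delta> makes the ratio of the two scale factors' d-th powers at most 5.
  So - f x is at most 20 d times the mean of \<bar>f\<bar> over the grid, and that mean is at most
  the discrete q-norm by Young's inequality.
\<close>

section \<open>Multilinear interpolation on the grid\<close>

definition tent :: "real \<Rightarrow> real" where
  "tent s = max 0 (1 - \<bar>s\<bar>)"

lemma tent_nonneg: "0 \<le> tent s"
  by (simp add: tent_def)

lemma tent_le_1: "tent s \<le> 1"
  by (simp add: tent_def)

lemma sum_tent_le_1_if_separated:
  fixes A :: "real set"
  assumes "finite A" and sep: "\<And>a b. a \<in> A \<Longrightarrow> b \<in> A \<Longrightarrow> a \<noteq> b \<Longrightarrow> 1 \<le> \<bar>a - b\<bar>"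
  shows "(\<Sum>a\<in>A. tent a) \<le> 1"
proof -
  define L where "L = {a\<in>A. -1 < a \<and> a \<le> 0}"
  define R where "R = {a\<in>A. 0 < a \<and> a < 1}"
  have "(\<Sum>a\<in>A. tent a) = (\<Sum>a\<in>L \<union> R. tent a)"
    by (rule sum.mono_neutral_right) (auto simp: \<open>finite A\<close> L_def R_def tent_def)
  also have "\<dots> = (\<Sum>a\<in>L. tent a) + (\<Sum>a\<in>R. tent a)"
    using \<open>finite A\<close> by (intro sum.union_disjoint) (auto simp: L_def R_def)
  also have "\<dots> \<le> 1"
  proof -
    \<comment> \<open>each of the two unit intervals around 0 contains at most one point of A\<close>
    have L_single: "L \<subseteq> {p}" if "p \<in> L" for p
      using that sep[of _ p] unfolding L_def by force
    have R_single: "R \<subseteq> {q}" if "q \<in> R" for q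
      using that sep[of _ q] unfolding R_def by force
    have sum_le_tent: "(\<Sum>a\<in>P. tent a) \<le> tent p" if "P \<subseteq> {p}" for P p
      using sum_mono2[of "{p}" P tent] that tent_nonneg by simp
    have sum_L: "(\<Sum>a\<in>L. tent a) \<le> (if L = {} then 0 else tent p)" if "L = {} \<or> p \<in> L" for p
      using that L_single sum_le_tent by auto
    have sum_R: "(\<Sum>a\<in>R. tent a) \<le> (if R = {} then 0 else tent q)" if "R = {} \<or> q \<in> R" for q
      using that R_single sum_le_tent by auto
    obtain p q where pq: "L = {} \<or> p \<in> L" "R = {} \<or> q \<in> R"
      by blast
    moreover have "tent p + tent q \<le> 1" if "p \<in> L" "q \<in> R"
      using sep[of p q] that unfolding L_def R_def tent_def by auto
    ultimately show ?thesis
      using sum_L[OF pq(1)] sum_R[OF pq(2)] tent_le_1[of p] tent_le_1[of q] by (auto split: if_splits)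
  qed
  finally show ?thesis .
qed

lemma sum_prod_coordinates_le_1:
  fixes Y :: "('a^'n) set" and g :: "'n \<Rightarrow> 'a \<Rightarrow> real"
  assumes "finite Y" and g_nonneg: "\<And>i s. 0 \<le> g i s"
    and marginal_le_1: "\<And>i. (\<Sum>s\<in>(\<lambda>y. y$i) ` Y. g i s) \<le> 1"
  shows "(\<Sum>y\<in>Y. \<Prod>i\<in>UNIV. g i (y$i)) \<le> 1"
proof -
  define A where "A i = (\<lambda>y. y$i) ` Y" for i
  have fin_A: "finite (A i)" for i
    using \<open>finite Y\<close> by (simp add: A_def)
  have "inj_on (\<lambda>y i. y$i) Y"
    by (auto simp: inj_on_def vec_eq_iff)
  then have "(\<Sum>y\<in>Y. \<Prod>i\<in>UNIV. g i (y$i)) = (\<Sum>F\<in>(\<lambda>y i. y$i) ` Y. \<Prod>i\<in>UNIV. g i (F i))"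
    by (simp add: sum.reindex)
  also have "\<dots> \<le> (\<Sum>F\<in>PiE UNIV A. \<Prod>i\<in>UNIV. g i (F i))"
    by (intro sum_mono2) (auto simp: A_def intro!: prod_nonneg g_nonneg finite_PiE fin_A)
  also have "\<dots> = (\<Prod>i\<in>UNIV. \<Sum>s\<in>A i. g i s)"
    by (simp add: prod_sum_PiE fin_A)
  also have "\<dots> \<le> 1"
    using marginal_le_1 by (intro prod_le_1) (auto simp: A_def intro!: sum_nonneg g_nonneg)
  finally show ?thesis .
qed

lemma grid_coordinate_separated:
  assumes "g \<in> grid \<delta>" "g' \<in> grid \<delta>" "g$i \<noteq> g'$i" "0 < \<delta>"
  shows "\<delta> \<le> \<bar>g$i - g'$i\<bar>"
proof -
  obtain k k' :: int where kk: "g$i = k * \<delta>" "g'$i = k' * \<delta>"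
    using assms(1,2) unfolding grid_def by blast
  then have "1 \<le> \<bar>real_of_int k - real_of_int k'\<bar>"
    using assms(3) by auto
  then have "1 * \<delta> \<le> \<bar>real_of_int k - real_of_int k'\<bar> * \<delta>"
    using \<open>0 < \<delta>\<close> by (intro mult_right_mono) auto
  then show ?thesis
    using kk \<open>0 < \<delta>\<close> by (simp add: abs_mult left_diff_distrib[symmetric])
qed

definition grid_floor :: "real \<Rightarrow> real^'n \<Rightarrow> real^'n" where
  "grid_floor \<delta> p = (\<chi> i. of_int \<lfloor>p$i / \<delta>\<rfloor> * \<delta>)"

lemma grid_floor_in_grid: "grid_floor \<delta> p \<in> grid \<delta>"
  by (auto simp: grid_floor_def grid_def)

lemma grid_floor_le:
  assumes "0 < \<delta>"
  shows "grid_floor \<delta> p $ i \<le> p $ i" and "p $ i < grid_floor \<delta> p $ i + \<delta>"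
proof -
  have "of_int \<lfloor>p$i / \<delta>\<rfloor> \<le> p$i / \<delta>" "p$i / \<delta> < of_int \<lfloor>p$i / \<delta>\<rfloor> + 1"
    by linarith+
  then have "of_int \<lfloor>p$i / \<delta>\<rfloor> * \<delta> \<le> p$i" "p$i < (of_int \<lfloor>p$i / \<delta>\<rfloor> + 1) * \<delta>"
    using pos_le_divide_eq[OF assms] pos_divide_less_eq[OF assms] by blast+
  then show "grid_floor \<delta> p $ i \<le> p $ i" "p $ i < grid_floor \<delta> p $ i + \<delta>"
    by (simp_all add: grid_floor_def algebra_simps)
qed

definition cart_cube :: "real^'n \<Rightarrow> real \<Rightarrow> (real^'n) set" where
  "cart_cube w \<delta> = {v. \<forall>i. \<bar>v$i - w$i\<bar> \<le> \<delta>}"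

definition grid_weight :: "real \<Rightarrow> real^'n \<Rightarrow> real^'n \<Rightarrow> real" where
  "grid_weight \<delta> w v = (\<Prod>i\<in>UNIV. tent ((w$i - v$i) / \<delta>))"

lemma grid_weight_nonneg: "0 \<le> grid_weight \<delta> w v"
  unfolding grid_weight_def by (intro prod_nonneg) (auto simp: tent_nonneg)

lemma sum_prod_bool:
  fixes p :: "'n::finite \<Rightarrow> bool \<Rightarrow> real"
  shows "(\<Sum>\<sigma>\<in>UNIV. \<Prod>i\<in>UNIV. p i (\<sigma> i)) = (\<Prod>i\<in>UNIV. p i True + p i False)"
proof -
  have "(\<Prod>i\<in>UNIV. p i True + p i False) = (\<Prod>i\<in>UNIV. \<Sum>s\<in>UNIV. p i s)"
    by (simp add: UNIV_bool add.commute)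
  also have "\<dots> = (\<Sum>\<sigma>\<in>PiE UNIV (\<lambda>_. UNIV). \<Prod>i\<in>UNIV. p i (\<sigma> i))"
    by (rule prod_sum_PiE) auto
  finally show ?thesis
    by simp
qed

lemma multilinear_weights:
  fixes u :: "'n::finite \<Rightarrow> real"
  defines "\<beta> \<sigma> \<equiv> \<Prod>i\<in>UNIV. if \<sigma> i then u i else 1 - u i"
  shows "(\<Sum>\<sigma>\<in>UNIV. \<beta> \<sigma>) = 1" and "(\<Sum>\<sigma>\<in>UNIV. \<beta> \<sigma> * of_bool (\<sigma> j)) = u j"
proof -
  show "(\<Sum>\<sigma>\<in>UNIV. \<beta> \<sigma>) = 1"
    unfolding \<beta>_def by (subst sum_prod_bool) simp
  have "\<beta> \<sigma> * of_bool (\<sigma> j) = (\<Prod>i\<in>UNIV. if \<sigma> i then u i else if i = j then 0 else 1 - u i)" for \<sigma>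
  proof -
    have "(\<Prod>i\<in>UNIV - {j}. if \<sigma> i then u i else 1 - u i) =
        (\<Prod>i\<in>UNIV - {j}. if \<sigma> i then u i else if i = j then 0 else 1 - u i)"
      by (rule prod.cong) auto
    then show ?thesis
      unfolding \<beta>_def by (simp add: prod.remove[of UNIV j])
  qed
  then show "(\<Sum>\<sigma>\<in>UNIV. \<beta> \<sigma> * of_bool (\<sigma> j)) = u j"
    by (simp only:) (subst sum_prod_bool; simp add: prod.remove[of UNIV j])
qed

definition cell_vertex :: "real \<Rightarrow> real^'n \<Rightarrow> ('n \<Rightarrow> bool) \<Rightarrow> real^'n" where
  "cell_vertex \<delta> w \<sigma> = (\<chi> i. grid_floor \<delta> w $ i + of_bool (\<sigma> i) * \<delta>)"

lemma cell_vertex_barycentric: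
  fixes w :: "real^'n"
  assumes "0 < \<delta>"
  defines "V \<equiv> cell_vertex \<delta> w"
  shows "inj V" and "V \<sigma> \<in> grid \<delta>" and "V \<sigma> \<in> cart_cube w \<delta>"
    and "(\<Sum>\<sigma>\<in>UNIV. grid_weight \<delta> w (V \<sigma>)) = 1"
    and "(\<Sum>\<sigma>\<in>UNIV. grid_weight \<delta> w (V \<sigma>) *\<^sub>R V \<sigma>) = w"
proof -
  define b where "b = grid_floor \<delta> w"
  define u where "u i = (w$i - b$i) / \<delta>" for i
  have u_bounds: "0 \<le> u i" "u i < 1" for i
    using grid_floor_le[OF \<open>0 < \<delta>\<close>, of w i] \<open>0 < \<delta>\<close> by (simp_all add: u_def b_def field_simps)
  have w_eq: "w$i = b$i + u i * \<delta>" for i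
    using \<open>0 < \<delta>\<close> by (simp add: u_def)
  have V_comp: "V \<sigma> $ i = b$i + of_bool (\<sigma> i) * \<delta>" for \<sigma> i
    by (simp add: V_def b_def cell_vertex_def)
  show "inj V"
  proof (rule injI)
    fix \<sigma> \<tau> assume "V \<sigma> = V \<tau>"
    then have "V \<sigma> $ i = V \<tau> $ i" for i
      by simp
    then show "\<sigma> = \<tau>"
      using \<open>0 < \<delta>\<close> by (simp add: fun_eq_iff V_comp) (metis of_bool_eq_iff)
  qed
  have "V \<sigma> $ i = of_int (\<lfloor>w$i / \<delta>\<rfloor> + of_bool (\<sigma> i)) * \<delta>" for \<sigma> i
    by (simp add: V_comp b_def grid_floor_def distrib_right)
  then show "V \<sigma> \<in> grid \<delta>"
    unfolding grid_def by blast
  have diff_eq: "w$i - V \<sigma> $ i = (u i - of_bool (\<sigma> i)) * \<delta>" for \<sigma> i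
    by (simp add: V_comp w_eq algebra_simps)
  have diff_bound: "\<bar>u i - of_bool (\<sigma> i)\<bar> \<le> 1" for \<sigma> i
    using u_bounds[of i] by auto
  have "\<bar>w$i - V \<sigma> $ i\<bar> \<le> \<delta>" for i
    using mult_right_mono[OF diff_bound[where i = i] less_imp_le[OF \<open>0 < \<delta>\<close>]] \<open>0 < \<delta>\<close>
    by (simp add: diff_eq abs_mult)
  then show "V \<sigma> \<in> cart_cube w \<delta>"
    by (simp add: cart_cube_def abs_minus_commute)
  have weight_eq: "grid_weight \<delta> w (V \<sigma>) = (\<Prod>i\<in>UNIV. if \<sigma> i then u i else 1 - u i)" for \<sigma>
  proof -
    have "tent (u i - of_bool (\<sigma> i)) = (if \<sigma> i then u i else 1 - u i)" for i
      using u_bounds[of i] by (simp add: tent_def)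
    then show ?thesis
      unfolding grid_weight_def diff_eq using \<open>0 < \<delta>\<close> by simp
  qed
  show "(\<Sum>\<sigma>\<in>UNIV. grid_weight \<delta> w (V \<sigma>)) = 1"
    unfolding weight_eq by (rule multilinear_weights(1))
  have "(\<Sum>\<sigma>\<in>UNIV. grid_weight \<delta> w (V \<sigma>) *\<^sub>R V \<sigma>) $ i = w $ i" for i
  proof -
    have "(\<Sum>\<sigma>\<in>UNIV. grid_weight \<delta> w (V \<sigma>) *\<^sub>R V \<sigma>) $ i
        = (\<Sum>\<sigma>\<in>UNIV. b$i * grid_weight \<delta> w (V \<sigma>) + \<delta> * (grid_weight \<delta> w (V \<sigma>) * of_bool (\<sigma> i)))"
      by (simp add: V_comp algebra_simps)
    also have "\<dots> = b$i * (\<Sum>\<sigma>\<in>UNIV. grid_weight \<delta> w (V \<sigma>))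
        + \<delta> * (\<Sum>\<sigma>\<in>UNIV. grid_weight \<delta> w (V \<sigma>) * of_bool (\<sigma> i))"
      by (simp only: sum.distrib sum_distrib_left)
    also have "\<dots> = w $ i"
      by (simp only: weight_eq multilinear_weights) (simp add: w_eq)
    finally show ?thesis .
  qed
  then show "(\<Sum>\<sigma>\<in>UNIV. grid_weight \<delta> w (V \<sigma>) *\<^sub>R V \<sigma>) = w"
    by (simp add: vec_eq_iff)
qed

lemma convex_on_le_grid_weight_sum:
  fixes f :: "real^'n \<Rightarrow> real"
  assumes "convex_on \<Omega> f" and "0 < \<delta>" and "finite (\<Omega> \<inter> grid \<delta>)" and "cart_cube w \<delta> \<subseteq> \<Omega>"
  shows "f w \<le> (\<Sum>v\<in>\<Omega> \<inter> grid \<delta>. grid_weight \<delta> w v * \<bar>f v\<bar>)"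
proof -
  define V where "V = cell_vertex \<delta> w"
  note V = cell_vertex_barycentric[OF \<open>0 < \<delta>\<close>, of w, folded V_def]
  have V_in: "V \<sigma> \<in> \<Omega>" for \<sigma>
    using V(3) assms(4) by blast
  have "f w = f (\<Sum>\<sigma>\<in>UNIV. grid_weight \<delta> w (V \<sigma>) *\<^sub>R V \<sigma>)"
    by (simp only: V(5))
  also have "\<dots> \<le> (\<Sum>\<sigma>\<in>UNIV. grid_weight \<delta> w (V \<sigma>) * f (V \<sigma>))"
    by (rule convex_on_sum[OF _ _ assms(1)]) (simp_all add: V(4) grid_weight_nonneg V_in)
  also have "\<dots> \<le> (\<Sum>\<sigma>\<in>UNIV. grid_weight \<delta> w (V \<sigma>) * \<bar>f (V \<sigma>)\<bar>)"
    by (intro sum_mono mult_left_mono) (auto simp: grid_weight_nonneg)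
  also have "\<dots> = (\<Sum>v\<in>range V. grid_weight \<delta> w v * \<bar>f v\<bar>)"
    using V(1) by (simp add: sum.reindex)
  also have "\<dots> \<le> (\<Sum>v\<in>\<Omega> \<inter> grid \<delta>. grid_weight \<delta> w v * \<bar>f v\<bar>)"
    using assms(3) V_in V(2) by (intro sum_mono2) (auto simp: grid_weight_nonneg)
  finally show ?thesis .
qed

section \<open>Convexity along rays towards grid points\<close>

lemma sum_grid_weight_dilated_le_1:
  fixes Y :: "(real^'n) set" and x v :: "real^'n"
  assumes "finite Y" and "Y \<subseteq> grid \<delta>" and "0 < \<delta>" and "0 < \<theta>" and "\<theta> \<le> 1"
  shows "(\<Sum>y\<in>Y. grid_weight \<delta> (x + (1/\<theta>) *\<^sub>R (y - x)) v) \<le> 1"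
proof -
  define \<phi> where "\<phi> i s = ((x$i + (s - x$i) / \<theta>) - v$i) / \<delta>" for i s
  have "(\<Sum>y\<in>Y. \<Prod>i\<in>UNIV. tent (\<phi> i (y$i))) \<le> 1"
  proof (rule sum_prod_coordinates_le_1[OF \<open>finite Y\<close> tent_nonneg])
    fix i
    have "inj (\<phi> i)"
      using \<open>0 < \<delta>\<close> \<open>0 < \<theta>\<close> by (auto intro!: injI simp: \<phi>_def field_simps)
    \<comment> \<open>dilating by 1/\<theta> \<ge> 1 keeps distinct grid coordinates at least one cell apart\<close>
    have sep: "1 \<le> \<bar>\<phi> i s - \<phi> i s'\<bar>" if "s \<in> (\<lambda>y. y$i) ` Y" "s' \<in> (\<lambda>y. y$i) ` Y" "s \<noteq> s'" for s s'
    proof -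
      have "\<delta> \<le> \<bar>s - s'\<bar>"
        using that assms(2) grid_coordinate_separated[OF _ _ _ \<open>0 < \<delta>\<close>] by blast
      then have "\<delta> * \<theta> \<le> \<bar>s - s'\<bar>"
        using \<open>0 < \<delta>\<close> \<open>\<theta> \<le> 1\<close> by (smt (verit) mult_left_le)
      moreover have "\<phi> i s - \<phi> i s' = (s - s') / (\<delta> * \<theta>)"
        using \<open>0 < \<delta>\<close> \<open>0 < \<theta>\<close> by (simp add: \<phi>_def field_simps)
      then have "\<bar>\<phi> i s - \<phi> i s'\<bar> = \<bar>s - s'\<bar> / (\<delta> * \<theta>)"
        using \<open>0 < \<delta>\<close> \<open>0 < \<theta>\<close> by (simp add: abs_divide abs_mult)
      ultimately show ?thesis
        using \<open>0 < \<delta>\<close> \<open>0 < \<theta>\<close> by (simp add: le_divide_eq)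
    qed
    then have "(\<Sum>a\<in>\<phi> i ` (\<lambda>y. y$i) ` Y. tent a) \<le> 1"
      using \<open>finite Y\<close> by (intro sum_tent_le_1_if_separated) (auto intro!: sep)
    then show "(\<Sum>s\<in>(\<lambda>y. y$i) ` Y. tent (\<phi> i s)) \<le> 1"
      using \<open>inj (\<phi> i)\<close> by (simp add: sum.reindex inj_on_subset[of "\<phi> i" UNIV])
  qed
  then show ?thesis
    by (simp add: grid_weight_def \<phi>_def divide_inverse mult.commute)
qed

lemma convex_on_neg_value_le_grid_sum:
  fixes f :: "real^'n \<Rightarrow> real"
  assumes "convex_on \<Omega> f" and "x \<in> \<Omega>" and "0 < \<delta>" and "0 < \<theta>" and "\<theta> < 1"
    and "finite (\<Omega> \<inter> grid \<delta>)" and "Y \<subseteq> \<Omega> \<inter> grid \<delta>"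
    and cubes: "\<And>y. y \<in> Y \<Longrightarrow> cart_cube (x + (1/\<theta>) *\<^sub>R (y - x)) \<delta> \<subseteq> \<Omega>"
  shows "(1 - \<theta>) * (- f x) * card Y \<le> (1 + \<theta>) * (\<Sum>v\<in>\<Omega> \<inter> grid \<delta>. \<bar>f v\<bar>)"
proof -
  define G where "G = \<Omega> \<inter> grid \<delta>"
  define w where "w y = x + (1/\<theta>) *\<^sub>R (y - x)" for y
  define S where "S = (\<Sum>v\<in>G. \<bar>f v\<bar>)"
  have "finite Y"
    using assms(6,7) finite_subset by blast
  \<comment> \<open>y lies on the segment from x to w y, and f (w y) is controlled by the grid values around w y\<close>
  have f_y: "f y \<le> (1 - \<theta>) * f x + \<theta> * (\<Sum>v\<in>G. grid_weight \<delta> (w y) v * \<bar>f v\<bar>)" if "y \<in> Y" for y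
  proof -
    have "w y \<in> cart_cube (w y) \<delta>"
      using \<open>0 < \<delta>\<close> by (simp add: cart_cube_def)
    then have "w y \<in> \<Omega>"
      using cubes[OF that] by (auto simp: w_def)
    moreover have "y = (1 - \<theta>) *\<^sub>R x + \<theta> *\<^sub>R w y"
      using \<open>0 < \<theta>\<close> by (simp add: w_def algebra_simps)
    ultimately have "f y \<le> (1 - \<theta>) * f x + \<theta> * f (w y)"
      using convex_onD[OF assms(1), of \<theta> x "w y"] assms(2,4,5) by auto
    moreover have "f (w y) \<le> (\<Sum>v\<in>G. grid_weight \<delta> (w y) v * \<bar>f v\<bar>)"
      unfolding G_def using cubes[OF that] by (intro convex_on_le_grid_weight_sum assms) (simp add: w_def)
    ultimately show ?thesis
      using \<open>0 < \<theta>\<close> by (smt (verit) mult_left_mono)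
  qed
  have "- S \<le> (\<Sum>y\<in>Y. f y)"
  proof -
    have "(\<Sum>y\<in>Y. \<bar>f y\<bar>) \<le> S"
      unfolding S_def G_def using assms(6,7) by (simp add: sum_mono2)
    moreover have "- (\<Sum>y\<in>Y. \<bar>f y\<bar>) \<le> (\<Sum>y\<in>Y. f y)"
      by (simp add: sum_negf[symmetric] sum_mono)
    ultimately show ?thesis
      by linarith
  qed
  also have "\<dots> \<le> (\<Sum>y\<in>Y. (1 - \<theta>) * f x + \<theta> * (\<Sum>v\<in>G. grid_weight \<delta> (w y) v * \<bar>f v\<bar>))"
    by (rule sum_mono) (rule f_y)
  also have "\<dots> = card Y * ((1 - \<theta>) * f x) + \<theta> * (\<Sum>v\<in>G. \<bar>f v\<bar> * (\<Sum>y\<in>Y. grid_weight \<delta> (w y) v))"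
    by (simp add: sum.distrib sum_distrib_left sum_distrib_right sum.swap[of _ Y G] mult_ac)
  also have "\<dots> \<le> card Y * ((1 - \<theta>) * f x) + \<theta> * S"
  proof -
    have "(\<Sum>y\<in>Y. grid_weight \<delta> (w y) v) \<le> 1" for v
      unfolding w_def using assms(3,4,5,7) \<open>finite Y\<close>
      by (intro sum_grid_weight_dilated_le_1) auto
    then have "(\<Sum>v\<in>G. \<bar>f v\<bar> * (\<Sum>y\<in>Y. grid_weight \<delta> (w y) v)) \<le> S"
      unfolding S_def by (intro sum_mono) (simp add: mult_left_le)
    then show ?thesis
      using \<open>0 < \<theta>\<close> by simp
  qed
  finally show ?thesis
    unfolding S_def G_def by (simp add: algebra_simps)
qed

section \<open>Counting grid points by volume\<close>

lemma dist_le_sqrt_card_if_cart_cube: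
  fixes v w :: "real^'n"
  assumes "v \<in> cart_cube w d"
  shows "dist v w \<le> sqrt CARD('n) * d"
proof -
  have "0 \<le> d"
    using assms by (auto simp: cart_cube_def intro: order_trans[OF abs_ge_zero])
  have "\<bar>(v - w)$i\<bar>\<^sup>2 \<le> d\<^sup>2" for i
    using assms by (intro power_mono) (auto simp: cart_cube_def)
  then have "(\<Sum>i\<in>UNIV. (norm ((v - w)$i))\<^sup>2) \<le> (\<Sum>i\<in>(UNIV::'n set). d\<^sup>2)"
    by (intro sum_mono) simp
  then have "dist v w \<le> sqrt (CARD('n) * d\<^sup>2)"
    unfolding dist_norm norm_vec_def L2_set_def by simp
  then show ?thesis
    using \<open>0 \<le> d\<close> by (simp add: real_sqrt_mult)
qed

lemma convex_shrink_towards_ball: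
  fixes z c e :: "'a::real_normed_vector"
  assumes "convex \<Omega>" and "cball c r \<subseteq> \<Omega>" and "z \<in> \<Omega>"
    and "0 < s" and "s \<le> 1" and "norm e \<le> s * r"
  shows "(1 - s) *\<^sub>R z + s *\<^sub>R c + e \<in> \<Omega>"
proof -
  define b where "b = c + (1/s) *\<^sub>R e"
  have "dist c b = norm e / s"
    using \<open>0 < s\<close> by (simp add: b_def dist_norm)
  also have "\<dots> \<le> r"
    using \<open>0 < s\<close> \<open>norm e \<le> s * r\<close> by (simp add: divide_le_eq mult.commute)
  finally have "b \<in> \<Omega>"
    using assms(2) by auto
  then have "(1 - s) *\<^sub>R z + s *\<^sub>R b \<in> \<Omega>"
    using convexD[OF assms(1,3), of b "1 - s" s] \<open>0 < s\<close> \<open>s \<le> 1\<close> by auto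
  moreover have "s *\<^sub>R b = s *\<^sub>R c + e"
    using \<open>0 < s\<close> by (simp add: b_def algebra_simps)
  ultimately show ?thesis
    by (simp add: add.assoc)
qed

lemma near_point_in_dilation:
  fixes z c e :: "'a::real_normed_vector"
  assumes "convex \<Omega>" and "cball c r \<subseteq> \<Omega>" and "z \<in> \<Omega>" and "0 < a" and "norm e \<le> a * r"
  shows "z + e \<in> (\<lambda>p. (1 + a) *\<^sub>R p + (- a) *\<^sub>R c) ` \<Omega>"
proof
  define s where "s = a / (1 + a)"
  have "0 < s" "s \<le> 1" and s_eq: "(1 + a) * (1 - s) = 1" "(1 + a) * s = a"
    using \<open>0 < a\<close> by (auto simp: s_def field_simps)
  have "norm ((1 / (1 + a)) *\<^sub>R e) \<le> s * r"
    using \<open>0 < a\<close> \<open>norm e \<le> a * r\<close> by (simp add: s_def divide_right_mono)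
  then show "(1 - s) *\<^sub>R z + s *\<^sub>R c + (1 / (1 + a)) *\<^sub>R e \<in> \<Omega>"
    using convex_shrink_towards_ball[OF assms(1-3) \<open>0 < s\<close> \<open>s \<le> 1\<close>] by blast
  have "(1 + a) *\<^sub>R ((1 - s) *\<^sub>R z + s *\<^sub>R c + (1 / (1 + a)) *\<^sub>R e)
      = ((1 + a) * (1 - s)) *\<^sub>R z + ((1 + a) * s) *\<^sub>R c + ((1 + a) * (1 / (1 + a))) *\<^sub>R e"
    by (simp only: scaleR_add_right scaleR_scaleR)
  also have "\<dots> = z + a *\<^sub>R c + e"
    using \<open>0 < a\<close> by (simp add: s_eq)
  finally show "z + e = (1 + a) *\<^sub>R ((1 - s) *\<^sub>R z + s *\<^sub>R c + (1 / (1 + a)) *\<^sub>R e) + (- a) *\<^sub>R c"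
    by simp
qed

lemma finite_inter_grid:
  fixes \<Omega> :: "(real^'n) set"
  assumes "bounded \<Omega>" and "0 < \<delta>"
  shows "finite (\<Omega> \<inter> grid \<delta>)"
proof -
  obtain B where B: "\<And>x. x \<in> \<Omega> \<Longrightarrow> norm x \<le> B"
    using assms(1) bounded_iff by blast
  define K where "K = \<lceil>B / \<delta>\<rceil>"
  have "\<Omega> \<inter> grid \<delta> \<subseteq> (\<lambda>k. \<chi> i. of_int (k i) * \<delta>) ` PiE UNIV (\<lambda>_. {-K..K})"
  proof
    fix x assume x: "x \<in> \<Omega> \<inter> grid \<delta>"
    then have "\<forall>i. \<exists>k::int. x$i = of_int k * \<delta>"
      by (simp add: grid_def)
    then obtain k where k: "\<And>i. x$i = of_int (k i) * \<delta>"
      by metis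
    have k_bound: "\<bar>k i\<bar> \<le> K" for i
    proof -
      have "\<bar>of_int (k i)\<bar> * \<delta> \<le> B"
        using B[of x] x component_le_norm_cart[of x i] k[of i] assms(2) by (simp add: abs_mult)
      then have "\<bar>of_int (k i)\<bar> \<le> B / \<delta>"
        using assms(2) by (simp add: le_divide_eq)
      then show ?thesis
        unfolding K_def by linarith
    qed
    have "k i \<in> {-K..K}" for i
      using k_bound[of i] unfolding atLeastAtMost_iff by arith
    then have "k \<in> PiE UNIV (\<lambda>_. {-K..K})"
      by (simp add: PiE_UNIV_domain)
    moreover have "x = (\<chi> i. of_int (k i) * \<delta>)"
      by (simp add: vec_eq_iff k)
    ultimately show "x \<in> (\<lambda>k. \<chi> i. of_int (k i) * \<delta>) ` PiE UNIV (\<lambda>_. {-K..K})"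
      by blast
  qed
  then show ?thesis
    by (rule finite_subset) (intro finite_imageI finite_PiE; simp)
qed

lemma sum_Basis_vec_nth [simp]: "(\<Sum>b\<in>(Basis :: (real^'n) set). b $ i) = 1"
proof -
  have "axis i (1::real) \<in> (Basis :: (real^'n) set)"
    by (auto simp: Basis_vec_def)
  then have "(\<Sum>b\<in>(Basis :: (real^'n) set). b \<bullet> axis i 1) = 1"
    by (simp add: inner_Basis sum.delta)
  then show ?thesis
    by (simp add: cart_eq_inner_axis)
qed

lemma grid_boxes_disjoint:
  assumes "g \<in> grid \<delta>" and "g' \<in> grid \<delta>" and "g \<noteq> g'" and "0 < \<delta>"
  shows "box g (g + \<delta> *\<^sub>R One) \<inter> box g' (g' + \<delta> *\<^sub>R One) = {}"
proof -
  obtain i where "g$i \<noteq> g'$i"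
    using \<open>g \<noteq> g'\<close> by (auto simp: vec_eq_iff)
  then have "\<delta> \<le> \<bar>g$i - g'$i\<bar>"
    using grid_coordinate_separated assms by blast
  show ?thesis
  proof (rule ccontr)
    assume "box g (g + \<delta> *\<^sub>R One) \<inter> box g' (g' + \<delta> *\<^sub>R One) \<noteq> {}"
    then obtain p where "p \<in> box g (g + \<delta> *\<^sub>R One)" "p \<in> box g' (g' + \<delta> *\<^sub>R One)"
      by blast
    then have "g$i < p$i" "p$i < g$i + \<delta>" "g'$i < p$i" "p$i < g'$i + \<delta>"
      by (auto simp: mem_box_cart)
    then show False
      using \<open>\<delta> \<le> \<bar>g$i - g'$i\<bar>\<close> by linarith
  qed
qed

lemma measure_Union_grid_boxes:
  fixes G :: "(real^'n) set" and \<delta> :: real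
  assumes "finite G" and "G \<subseteq> grid \<delta>" and "0 < \<delta>"
  shows "measure lebesgue (\<Union>g\<in>G. box g (g + \<delta> *\<^sub>R One)) = card G * \<delta> ^ CARD('n)"
proof -
  have "measure lebesgue (\<Union>g\<in>G. box g (g + \<delta> *\<^sub>R One)) = (\<Sum>g\<in>G. measure lebesgue (box g (g + \<delta> *\<^sub>R One)))"
  proof (rule measure_finite_Union[OF \<open>finite G\<close>])
    show "disjoint_family_on (\<lambda>g. box g (g + \<delta> *\<^sub>R One)) G"
      using assms(2,3) grid_boxes_disjoint by (force simp: disjoint_family_on_def)
    show "emeasure lebesgue (box g (g + \<delta> *\<^sub>R One)) \<noteq> \<infinity>" for g
      using lmeasurable_box[of g "g + \<delta> *\<^sub>R One"] by (simp add: fmeasurable_def)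
  qed auto
  also have "\<dots> = card G * \<delta> ^ CARD('n)"
    using \<open>0 < \<delta>\<close> by (simp add: measure_lborel_box_eq inner_diff_left inner_add_left)
  finally show ?thesis .
qed

lemma card_grid_volume_le:
  fixes \<Omega> :: "(real^'n) set" and \<delta> :: real
  assumes "compact \<Omega>" and "convex \<Omega>" and "cball c r \<subseteq> \<Omega>" and "0 < \<delta>" and "0 < r"
  shows "card (\<Omega> \<inter> grid \<delta>) * \<delta> ^ CARD('n)
    \<le> (1 + sqrt CARD('n) * \<delta> / r) ^ CARD('n) * measure lebesgue \<Omega>"
proof -
  define a where "a = sqrt CARD('n) * \<delta> / r"
  define D where "D = (\<lambda>p::real^'n. (1 + a) *\<^sub>R p + (- a) *\<^sub>R c)"
  have "0 < a"
    using assms(4,5) by (simp add: a_def)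
  have fin: "finite (\<Omega> \<inter> grid \<delta>)"
    using finite_inter_grid[OF compact_imp_bounded[OF assms(1)] assms(4)] .
  have "(\<Union>g\<in>\<Omega> \<inter> grid \<delta>. box g (g + \<delta> *\<^sub>R One)) \<subseteq> D ` \<Omega>"
  proof clarify
    fix g p assume "g \<in> \<Omega>" and p: "p \<in> box g (g + \<delta> *\<^sub>R One)"
    have "\<bar>p$i - g$i\<bar> \<le> \<delta>" for i
      using p[unfolded mem_box_cart, rule_format, of i] by simp
    then have "p \<in> cart_cube g \<delta>"
      by (simp add: cart_cube_def)
    then have "norm (p - g) \<le> a * r"
      using dist_le_sqrt_card_if_cart_cube assms(5) by (fastforce simp: a_def dist_norm)
    then have "g + (p - g) \<in> D ` \<Omega>"
      unfolding D_def by (rule near_point_in_dilation[OF assms(2,3) \<open>g \<in> \<Omega>\<close> \<open>0 < a\<close>])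
    then show "p \<in> D ` \<Omega>"
      by simp
  qed
  moreover have "compact (D ` \<Omega>)"
    unfolding D_def by (intro compact_continuous_image assms(1) continuous_intros)
  ultimately have "measure lebesgue (\<Union>g\<in>\<Omega> \<inter> grid \<delta>. box g (g + \<delta> *\<^sub>R One)) \<le> measure lebesgue (D ` \<Omega>)"
    using fin by (intro measure_mono_fmeasurable) (auto intro: lmeasurable_compact)
  also have "\<dots> = (1 + a) ^ CARD('n) * measure lebesgue \<Omega>"
    using measure_lebesgue_affine[of "1 + a" "- a *\<^sub>R c" \<Omega>] \<open>0 < a\<close> by (simp add: D_def)
  finally show ?thesis
    using measure_Union_grid_boxes[OF fin _ assms(4)]
    by (simp add: a_def)
qed

text \<open>y is good if the \<delta>-cube around the point w with y = (1 - \<theta>) x + \<theta> w lies in \<Omega>.\<close>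

definition good_grid_points :: "real \<Rightarrow> (real^'n) set \<Rightarrow> real^'n \<Rightarrow> real \<Rightarrow> (real^'n) set" where
  "good_grid_points \<delta> \<Omega> x \<theta> = {y \<in> \<Omega> \<inter> grid \<delta>. cart_cube (x + (1/\<theta>) *\<^sub>R (y - x)) \<delta> \<subseteq> \<Omega>}"

lemma shrunk_image_subset_good_cells:
  fixes \<Omega> :: "(real^'n) set" and \<delta> :: real
  assumes "convex \<Omega>" and "cball c r \<subseteq> \<Omega>" and "x \<in> \<Omega>" and "0 < \<delta>"
    and "0 < a" and "3 * a \<le> 1" and a_bound: "sqrt CARD('n) * \<delta> \<le> a * r"
    and "1/2 \<le> \<theta>" and "\<theta> \<le> 1"
  shows "(\<lambda>z. (\<theta> * (1 - 3 * a)) *\<^sub>R z + ((1 - \<theta>) *\<^sub>R x + (\<theta> * (3 * a)) *\<^sub>R c)) ` \<Omega>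
    \<subseteq> (\<Union>y\<in>good_grid_points \<delta> \<Omega> x \<theta>. cbox y (y + \<delta> *\<^sub>R One))"
proof clarify
  fix z assume "z \<in> \<Omega>"
  define z' where "z' = (1 - 3 * a) *\<^sub>R z + (3 * a) *\<^sub>R c"
  define p where "p = (1 - \<theta>) *\<^sub>R x + \<theta> *\<^sub>R z'"
  define y where "y = grid_floor \<delta> p"
  define w where "w = x + (1/\<theta>) *\<^sub>R (y - x)"
  have "0 < \<theta>"
    using \<open>1/2 \<le> \<theta>\<close> by linarith
  have "\<bar>p$i - y$i\<bar> \<le> \<delta>" for i
    using grid_floor_le[OF \<open>0 < \<delta>\<close>, of p i] \<open>0 < \<delta>\<close> by (auto simp: y_def abs_le_iff)
  then have p_cube: "p \<in> cart_cube y \<delta>"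
    by (simp add: cart_cube_def)
  \<comment> \<open>w is z' moved by less than 3 a r, and \<Omega> contains the 3 a r-neighbourhood of z'\<close>
  have w_cube: "cart_cube w \<delta> \<subseteq> \<Omega>"
  proof
    fix v assume "v \<in> cart_cube w \<delta>"
    define e where "e = (v - w) - (1/\<theta>) *\<^sub>R (p - y)"
    have "norm (v - w) \<le> a * r" and "norm (p - y) \<le> a * r"
      using dist_le_sqrt_card_if_cart_cube[OF \<open>v \<in> cart_cube w \<delta>\<close>]
        dist_le_sqrt_card_if_cart_cube[OF p_cube] a_bound by (simp_all add: dist_norm)
    moreover have "a * r * 1 \<le> a * r * (2 * \<theta>)"
      using \<open>norm (p - y) \<le> a * r\<close> \<open>1/2 \<le> \<theta>\<close> by (intro mult_left_mono) (auto intro: order_trans[OF norm_ge_zero])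
    ultimately have "norm ((1/\<theta>) *\<^sub>R (p - y)) \<le> 2 * (a * r)"
      using \<open>0 < \<theta>\<close> by (simp add: divide_le_eq mult_ac)
    then have "norm e \<le> (3 * a) * r"
      using norm_triangle_ineq4[of "v - w" "(1/\<theta>) *\<^sub>R (p - y)"] \<open>norm (v - w) \<le> a * r\<close>
      by (simp add: e_def)
    then have "(1 - 3 * a) *\<^sub>R z + (3 * a) *\<^sub>R c + e \<in> \<Omega>"
      using convex_shrink_towards_ball[OF assms(1,2) \<open>z \<in> \<Omega>\<close>] \<open>0 < a\<close> \<open>3 * a \<le> 1\<close> by simp
    moreover have "w = z' - (1/\<theta>) *\<^sub>R (p - y)"
      using \<open>0 < \<theta>\<close> by (simp add: w_def p_def algebra_simps)
    ultimately show "v \<in> \<Omega>"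
      by (simp add: e_def z'_def algebra_simps)
  qed
  have "w \<in> \<Omega>"
    using w_cube \<open>0 < \<delta>\<close> by (auto simp: cart_cube_def)
  moreover have "y = (1 - \<theta>) *\<^sub>R x + \<theta> *\<^sub>R w"
    using \<open>0 < \<theta>\<close> by (simp add: w_def algebra_simps)
  ultimately have "y \<in> \<Omega>"
    using convexD[OF assms(1,3), of w "1 - \<theta>" \<theta>] \<open>0 < \<theta>\<close> \<open>\<theta> \<le> 1\<close> by auto
  then have "y \<in> good_grid_points \<delta> \<Omega> x \<theta>"
    using w_cube by (simp add: good_grid_points_def y_def grid_floor_in_grid w_def)
  moreover have "p \<in> cbox y (y + \<delta> *\<^sub>R One)"
    using grid_floor_le[OF \<open>0 < \<delta>\<close>, of p] by (simp add: mem_box_cart y_def less_imp_le)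
  moreover have "(\<theta> * (1 - 3 * a)) *\<^sub>R z + ((1 - \<theta>) *\<^sub>R x + (\<theta> * (3 * a)) *\<^sub>R c) = p"
    by (simp add: p_def z'_def algebra_simps)
  ultimately show "(\<theta> * (1 - 3 * a)) *\<^sub>R z + ((1 - \<theta>) *\<^sub>R x + (\<theta> * (3 * a)) *\<^sub>R c)
      \<in> (\<Union>y\<in>good_grid_points \<delta> \<Omega> x \<theta>. cbox y (y + \<delta> *\<^sub>R One))"
    by auto
qed

lemma shrunk_volume_le_card_good_grid_points:
  fixes \<Omega> :: "(real^'n) set" and \<delta> :: real
  assumes "compact \<Omega>" and "convex \<Omega>" and "cball c r \<subseteq> \<Omega>" and "x \<in> \<Omega>" and "0 < \<delta>"
    and "0 < a" and "3 * a \<le> 1" and "sqrt CARD('n) * \<delta> \<le> a * r"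
    and "1/2 \<le> \<theta>" and "\<theta> \<le> 1"
  shows "(\<theta> * (1 - 3 * a)) ^ CARD('n) * measure lebesgue \<Omega>
    \<le> card (good_grid_points \<delta> \<Omega> x \<theta>) * \<delta> ^ CARD('n)"
proof -
  define T where "T = (\<lambda>z::real^'n. (\<theta> * (1 - 3 * a)) *\<^sub>R z + ((1 - \<theta>) *\<^sub>R x + (\<theta> * (3 * a)) *\<^sub>R c))"
  define Y where "Y = good_grid_points \<delta> \<Omega> x \<theta>"
  have "finite Y"
    using finite_inter_grid[OF compact_imp_bounded[OF assms(1)] assms(5)]
    by (rule finite_subset[rotated]) (auto simp: Y_def good_grid_points_def)
  have "0 \<le> \<theta> * (1 - 3 * a)"
    using assms(7,9) by simp
  then have "(\<theta> * (1 - 3 * a)) ^ CARD('n) * measure lebesgue \<Omega> = measure lebesgue (T ` \<Omega>)"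
    using measure_lebesgue_affine[of "\<theta> * (1 - 3 * a)" _ \<Omega>] by (simp add: T_def)
  also have "\<dots> \<le> measure lebesgue (\<Union>y\<in>Y. cbox y (y + \<delta> *\<^sub>R One))"
  proof (rule measure_mono_fmeasurable)
    show "T ` \<Omega> \<subseteq> (\<Union>y\<in>Y. cbox y (y + \<delta> *\<^sub>R One))"
      unfolding T_def Y_def by (rule shrunk_image_subset_good_cells[OF assms(2-10)])
    show "T ` \<Omega> \<in> sets lebesgue"
      unfolding T_def by (intro fmeasurableD lmeasurable_compact compact_continuous_image assms(1) continuous_intros)
    show "(\<Union>y\<in>Y. cbox y (y + \<delta> *\<^sub>R One)) \<in> fmeasurable lebesgue"
      using \<open>finite Y\<close> by (intro lmeasurable_compact compact_UN) auto
  qed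
  also have "\<dots> \<le> (\<Sum>y\<in>Y. measure lebesgue (cbox y (y + \<delta> *\<^sub>R One)))"
    using \<open>finite Y\<close> by (intro measure_UNION_le) auto
  also have "\<dots> = card Y * \<delta> ^ CARD('n)"
    using \<open>0 < \<delta>\<close> by (simp add: measure_lborel_cbox_eq inner_diff_left inner_add_left)
  finally show ?thesis
    by (simp add: Y_def)
qed

lemma one_plus_pow_le_5_mult_shrink_pow:
  fixes a :: real and n :: nat
  assumes "1 \<le> n" and "0 \<le> a" and "a \<le> 1 / (10 * n)"
  shows "(1 + a) ^ n \<le> 5 * ((1 - 1 / (2 * n)) * (1 - 3 * a)) ^ n"
proof -
  have na: "n * a \<le> 1/10"
    using assms by (simp add: field_simps)
  have "1 / (10 * n) \<le> 1/10"
    using assms(1) by (simp add: field_simps)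
  then have a: "a \<le> 1/10"
    using assms(3) by linarith
  have half: "1/2 \<le> (1 - 1 / (2 * n)) ^ n"
    using Bernoulli_inequality[of "- 1 / (2 * n)" n] assms(1) by (simp add: field_simps)
  \<comment> \<open>Bernoulli, together with (1 + a) (1 - a) \<le> 1 and 1 - 4 a \<le> (1 - 3 a) (1 - a)\<close>
  have "1 - n * (4 * a) \<le> (1 - 4 * a) ^ n"
    using Bernoulli_inequality[of "- (4 * a)" n] a by simp
  also have "(1 - 4 * a) ^ n \<le> ((1 - 3 * a) * (1 - a)) ^ n"
    using assms(2) a by (intro power_mono) (auto simp: algebra_simps)
  finally have lower: "1 \<le> (5/3) * ((1 - 3 * a) ^ n * (1 - a) ^ n)"
    using na by (simp add: power_mult_distrib)
  have "((1 + a) * (1 - a)) ^ n \<le> 1"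
    using assms(2) a mult_mono[of a 1 a 1] by (intro power_le_one) (auto simp: algebra_simps)
  then have "(1 + a) ^ n * (1 - a) ^ n \<le> (5/3) * (1 - 3 * a) ^ n * (1 - a) ^ n"
    using lower by (simp add: power_mult_distrib mult.assoc)
  then have "(1 + a) ^ n \<le> (5/3) * (1 - 3 * a) ^ n"
    using a by (simp add: mult_le_cancel_right)
  also have "\<dots> \<le> 5 * ((1 - 1 / (2 * n)) ^ n * (1 - 3 * a) ^ n)"
    using mult_right_mono[OF half, of "(1 - 3 * a) ^ n"] a by simp
  finally show ?thesis
    by (simp add: power_mult_distrib)
qed

lemma card_grid_le_5_card_good_grid_points:
  fixes \<Omega> :: "(real^'n) set" and \<delta> :: real
  defines "\<theta> \<equiv> 1 - 1 / (2 * CARD('n))"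
  assumes "compact \<Omega>" and "convex \<Omega>" and "cball c r \<subseteq> \<Omega>" and "x \<in> \<Omega>" and "0 < \<delta>"
    and r_large: "10 * CARD('n) * sqrt CARD('n) * \<delta> \<le> r"
  shows "card (\<Omega> \<inter> grid \<delta>) \<le> 5 * card (good_grid_points \<delta> \<Omega> x \<theta>)"
    and "0 < card (good_grid_points \<delta> \<Omega> x \<theta>)"
proof -
  define n where "n = real CARD('n)"
  define a where "a = sqrt n * \<delta> / r"
  define Y where "Y = good_grid_points \<delta> \<Omega> x \<theta>"
  have "1 \<le> n" "1 \<le> sqrt n"
    by (simp_all add: n_def Suc_le_eq)
  have "0 < 10 * n * sqrt n * \<delta>"
    using \<open>1 \<le> n\<close> \<open>0 < \<delta>\<close> by simp
  then have "0 < r"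
    using r_large unfolding n_def by linarith
  have "0 < a"
    using \<open>0 < \<delta>\<close> \<open>0 < r\<close> \<open>1 \<le> n\<close> by (simp add: a_def)
  have "a \<le> sqrt n * \<delta> / (10 * n * sqrt n * \<delta>)"
    unfolding a_def using r_large \<open>0 < 10 * n * sqrt n * \<delta>\<close> \<open>0 < \<delta>\<close> \<open>0 < r\<close>
    by (intro divide_left_mono mult_pos_pos) (simp_all add: n_def)
  also have "\<dots> = 1 / (10 * n)"
    using \<open>0 < \<delta>\<close> \<open>1 \<le> sqrt n\<close> by simp
  finally have a_small: "a \<le> 1 / (10 * n)" .
  moreover have "1 / (10 * n) \<le> 1 / 10"
    using \<open>1 \<le> n\<close> by (simp add: field_simps)
  ultimately have "3 * a < 1"
    by linarith
  have "1/2 \<le> \<theta>" "\<theta> \<le> 1"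
    using \<open>1 \<le> n\<close> by (simp_all add: \<theta>_def n_def field_simps)
  have "0 < measure lebesgue (cball c r)"
    using content_cball_pos[OF \<open>0 < r\<close>] by simp
  also have "\<dots> \<le> measure lebesgue \<Omega>"
    by (rule measure_mono_fmeasurable[OF assms(4)]) (auto intro: lmeasurable_compact assms(2))
  finally have "0 < measure lebesgue \<Omega>" .
  have good_lower: "(\<theta> * (1 - 3 * a)) ^ CARD('n) * measure lebesgue \<Omega> \<le> card Y * \<delta> ^ CARD('n)"
    unfolding Y_def
    by (rule shrunk_volume_le_card_good_grid_points[OF assms(2-6) \<open>0 < a\<close> less_imp_le[OF \<open>3 * a < 1\<close>] _ \<open>1/2 \<le> \<theta>\<close> \<open>\<theta> \<le> 1\<close>])
      (use \<open>0 < r\<close> in \<open>simp add: a_def n_def\<close>)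
  have "card (\<Omega> \<inter> grid \<delta>) * \<delta> ^ CARD('n) \<le> (1 + a) ^ CARD('n) * measure lebesgue \<Omega>"
    using card_grid_volume_le[OF assms(2-4,6) \<open>0 < r\<close>] by (simp add: a_def n_def)
  also have "\<dots> \<le> 5 * (\<theta> * (1 - 3 * a)) ^ CARD('n) * measure lebesgue \<Omega>"
  proof -
    have "(1 + a) ^ CARD('n) \<le> 5 * (\<theta> * (1 - 3 * a)) ^ CARD('n)"
      unfolding \<theta>_def
      by (rule one_plus_pow_le_5_mult_shrink_pow) (use \<open>0 < a\<close> a_small in \<open>simp_all add: n_def Suc_le_eq\<close>)
    then show ?thesis
      using \<open>0 < measure lebesgue \<Omega>\<close> by (intro mult_right_mono) simp_all
  qed
  also have "\<dots> \<le> 5 * card Y * \<delta> ^ CARD('n)"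
    using good_lower by simp
  finally have "card (\<Omega> \<inter> grid \<delta>) * \<delta> ^ CARD('n) \<le> (5 * card Y) * \<delta> ^ CARD('n)"
    by simp
  then show "card (\<Omega> \<inter> grid \<delta>) \<le> 5 * card Y"
    using \<open>0 < \<delta>\<close> by (metis mult_right_le_imp_le of_nat_le_iff zero_less_power)
  have "0 < (\<theta> * (1 - 3 * a)) ^ CARD('n) * measure lebesgue \<Omega>"
    using \<open>1/2 \<le> \<theta>\<close> \<open>3 * a < 1\<close> \<open>0 < measure lebesgue \<Omega>\<close> by (intro mult_pos_pos zero_less_power) auto
  then have "0 < real (card Y) * \<delta> ^ CARD('n)"
    using good_lower by linarith
  then show "0 < card Y"
    by (simp add: zero_less_mult_iff)
qed

lemma le_powr_div_add:
  fixes u q :: real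
  assumes "0 \<le> u" and "1 \<le> q"
  shows "u \<le> u powr q / q + (1 - 1/q)"
proof (cases "u = 0")
  case False
  then have "(u powr q) powr (1/q) * 1 powr (1 - 1/q) \<le> (1/q) * u powr q + (1 - 1/q) * 1"
    using assms by (intro Youngs_inequality_0) (auto simp: field_simps)
  then show ?thesis
    using assms False by (simp add: powr_powr)
qed (use assms in \<open>simp add: field_simps\<close>)

lemma mean_abs_le_if_power_mean_le:
  fixes f :: "'a \<Rightarrow> real"
  assumes "finite G" and "1 \<le> q" and "0 < t"
    and power_mean: "((1 / card G) * (\<Sum>s\<in>G. \<bar>f s\<bar> powr q)) powr (1/q) \<le> t"
  shows "(\<Sum>s\<in>G. \<bar>f s\<bar>) / card G \<le> t"
proof (cases "G = {}")
  case False
  define N where "N = real (card G)"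
  define P where "P = (\<Sum>s\<in>G. \<bar>f s\<bar> powr q)"
  have "0 < N"
    using False \<open>finite G\<close> by (simp add: N_def card_gt_0_iff)
  have "0 \<le> P"
    by (simp add: P_def sum_nonneg)
  then have "0 \<le> P / N"
    using \<open>0 < N\<close> by simp
  then have "P / N = ((P / N) powr (1/q)) powr q"
    using \<open>1 \<le> q\<close> \<open>0 \<le> P\<close> \<open>0 < N\<close> by (simp add: powr_powr)
  also have "\<dots> \<le> t powr q"
    using power_mean \<open>0 \<le> P / N\<close> \<open>1 \<le> q\<close> by (intro powr_mono2) (auto simp: P_def N_def)
  finally have P_le: "P \<le> N * t powr q"
    using \<open>0 < N\<close> by (simp add: field_simps)
  \<comment> \<open>Young's inequality, termwise for \<bar>f s\<bar> / t\<close>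
  have "(\<Sum>s\<in>G. \<bar>f s\<bar> / t) \<le> (\<Sum>s\<in>G. (\<bar>f s\<bar> / t) powr q / q + (1 - 1/q))"
    using \<open>1 \<le> q\<close> \<open>0 < t\<close> by (intro sum_mono le_powr_div_add) auto
  also have "\<dots> = P / t powr q / q + N * (1 - 1/q)"
    using \<open>0 < t\<close> by (simp add: P_def N_def powr_divide sum.distrib sum_divide_distrib)
  also have "\<dots> \<le> N / q + N * (1 - 1/q)"
  proof -
    have "P / t powr q \<le> N"
      using P_le \<open>0 < t\<close> by (simp add: divide_le_eq)
    then have "P / t powr q / q \<le> N / q"
      using \<open>1 \<le> q\<close> by (intro divide_right_mono) auto
    then show ?thesis
      by simp
  qed
  also have "\<dots> = N"
    using \<open>1 \<le> q\<close> by (simp add: field_simps)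
  finally have "(\<Sum>s\<in>G. \<bar>f s\<bar>) / t \<le> N"
    by (simp add: sum_divide_distrib)
  then have "(\<Sum>s\<in>G. \<bar>f s\<bar>) \<le> t * N"
    using \<open>0 < t\<close> by (simp add: pos_divide_le_eq mult.commute)
  then show ?thesis
    using \<open>0 < N\<close> by (simp add: N_def pos_divide_le_eq)
qed (use \<open>0 < t\<close> in simp)

lemma convex_on_lower_bound_grid_mean:
  fixes \<Omega> :: "(real^'n) set" and f :: "real^'n \<Rightarrow> real" and \<delta> :: real
  assumes "compact \<Omega>" and "convex \<Omega>" and "cball c r \<subseteq> \<Omega>" and "0 < \<delta>"
    and "10 * CARD('n) * sqrt CARD('n) * \<delta> \<le> r"
    and "convex_on \<Omega> f" and "x \<in> \<Omega>"
  shows "- f x \<le> 20 * real CARD('n) * ((\<Sum>v\<in>\<Omega> \<inter> grid \<delta>. \<bar>f v\<bar>) / card (\<Omega> \<inter> grid \<delta>))"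
proof -
  define n where "n = real CARD('n)"
  define \<theta> where "\<theta> = 1 - 1 / (2 * n)"
  define G where "G = \<Omega> \<inter> grid \<delta>"
  define Y where "Y = good_grid_points \<delta> \<Omega> x \<theta>"
  define S where "S = (\<Sum>v\<in>G. \<bar>f v\<bar>)"
  have "1 \<le> n"
    by (simp add: n_def Suc_le_eq)
  have "0 < \<theta>" "\<theta> < 1"
    using \<open>1 \<le> n\<close> by (simp_all add: \<theta>_def field_simps)
  have "finite G"
    using finite_inter_grid[OF compact_imp_bounded[OF assms(1)] assms(4)] by (simp add: G_def)
  have count: "card G \<le> 5 * card Y" "0 < card Y"
    using card_grid_le_5_card_good_grid_points[OF assms(1-3,7,4,5)] by (simp_all add: G_def Y_def \<theta>_def n_def)
  have "0 \<le> S"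
    by (simp add: S_def sum_nonneg)
  have "- f x * card Y / (2 * n) = (1 - \<theta>) * (- f x) * card Y"
    by (simp add: \<theta>_def)
  also have "\<dots> \<le> (1 + \<theta>) * S"
    using \<open>finite G\<close> unfolding S_def G_def
    by (intro convex_on_neg_value_le_grid_sum[OF assms(6,7,4) \<open>0 < \<theta>\<close> \<open>\<theta> < 1\<close>])
       (auto simp: Y_def good_grid_points_def)
  also have "\<dots> \<le> 2 * S"
    using \<open>\<theta> < 1\<close> \<open>0 \<le> S\<close> by (intro mult_right_mono) auto
  finally have "- f x * card Y \<le> 2 * S * (2 * n)"
    using \<open>1 \<le> n\<close> by (subst (asm) pos_divide_le_eq) simp_all
  then have "- f x * card Y \<le> 4 * n * S"
    by (simp add: algebra_simps)
  have "- f x * card G \<le> 20 * n * S"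
  proof (cases "f x \<le> 0")
    case True
    then have "- f x * card G \<le> - f x * (5 * card Y)"
      using count(1) by (intro mult_left_mono) simp_all
    then show ?thesis
      using \<open>- f x * card Y \<le> 4 * n * S\<close> by linarith
  next
    case False
    then have "- f x * card G \<le> 0"
      by (simp add: mult_nonpos_nonneg)
    moreover have "0 \<le> 20 * n * S"
      using \<open>1 \<le> n\<close> \<open>0 \<le> S\<close> by simp
    ultimately show ?thesis
      by linarith
  qed
  moreover have "Y \<subseteq> G"
    by (auto simp: Y_def G_def good_grid_points_def)
  then have "0 < card G"
    using count(2) card_mono[OF \<open>finite G\<close> \<open>Y \<subseteq> G\<close>] by linarith
  ultimately have "- f x \<le> 20 * n * S / card G"
    by (simp add: pos_le_divide_eq)
  then show ?thesis
    by (simp add: G_def S_def n_def)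
qed

lemma powr_three_halves: "0 \<le> x \<Longrightarrow> x powr (3/2) = x * sqrt x"
  by (cases "x = 0") (simp_all add: powr_add[of x 1 "1/2", simplified] powr_half_sqrt)

theorem lemma9p4:
  fixes \<Omega> :: "(real^'n) set" and \<delta> q t :: real and f :: "real^'n \<Rightarrow> real"
  assumes "\<delta> > 0" and "1 \<le> q"
    and "compact \<Omega>" and "convex \<Omega>" and "interior \<Omega> \<noteq> {}"
    and "\<forall>x\<in>\<Omega>. \<forall>i. 0 \<le> x $ i \<and> x $ i \<le> 1"
    and "\<exists>c r. r \<ge> 10 * real CARD('n) powr (3/2) * \<delta> \<and> ball c r \<subseteq> \<Omega>"
    and "t > 0" and "f \<in> B_S \<delta> q t \<Omega>"
  shows "\<forall>x\<in>\<Omega>. f x \<ge> - 20 * real CARD('n) * t"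
proof
  fix x assume "x \<in> \<Omega>"
  obtain c r where r0: "10 * real CARD('n) powr (3/2) * \<delta> \<le> r" and "ball c r \<subseteq> \<Omega>"
    using assms(7) by blast
  then have r: "10 * CARD('n) * sqrt CARD('n) * \<delta> \<le> r"
    by (simp add: powr_three_halves)
  have "0 < 10 * CARD('n) * sqrt CARD('n) * \<delta>"
    using \<open>0 < \<delta>\<close> by simp
  then have "0 < r"
    using r by linarith
  then have "cball c r \<subseteq> \<Omega>"
    using closure_mono[OF \<open>ball c r \<subseteq> \<Omega>\<close>] compact_imp_closed[OF assms(3)] by simp
  have "convex_on \<Omega> f" and ell: "ell_S \<delta> f \<Omega> q \<le> t"
    using assms(9) by (simp_all add: B_S_def)
  have "- f x \<le> 20 * real CARD('n) * ((\<Sum>v\<in>\<Omega> \<inter> grid \<delta>. \<bar>f v\<bar>) / card (\<Omega> \<inter> grid \<delta>))"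
    by (rule convex_on_lower_bound_grid_mean[OF assms(3,4) \<open>cball c r \<subseteq> \<Omega>\<close> assms(1) r \<open>convex_on \<Omega> f\<close> \<open>x \<in> \<Omega>\<close>])
  also have "\<dots> \<le> 20 * real CARD('n) * t"
  proof -
    have "(\<Sum>v\<in>\<Omega> \<inter> grid \<delta>. \<bar>f v\<bar>) / card (\<Omega> \<inter> grid \<delta>) \<le> t"
      using finite_inter_grid[OF compact_imp_bounded[OF assms(3)] assms(1)] assms(2,8) ell
      unfolding ell_S_def by (rule mean_abs_le_if_power_mean_le)
    then show ?thesis
      by (intro mult_left_mono) simp_all
  qed
  finally show "- 20 * real CARD('n) * t \<le> f x"
    by simp
qed

end
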